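(* There is a procedure which makes six two-qubit measurements, each on a fresh copy of an unknown two-qubit state $|\psi\rangle$, and which, for every $|\psi\rangle$ and every collection of outcomes of these measurements each of which occurs with nonzero probability on $|\psi\rangle$, outputs with certainty a two-qubit Pauli string $P\in\{I,X,Y,Z\}^{\otimes 2}$ that does not stabilize $|\psi\rangle$ (i.e. such that measuring the observable $P$ on $|\psi\rangle$ does not have a deterministic outcome).
   Context: For a Pauli string $P$ (a Hermitian operator with eigenvalues $\pm1$), the Pauli measurement of $P$ projects onto its $+1$ or $-1$ eigenspace and reports the eigenvalue. $P$ is called a stabilizer of a state if this outcome is deterministic and a non-stabilizer otherwise. A joint measurement of pairwise commuting Pauli strings gives outcomes for each of them, and the outcome of a product of these strings is the product of their outcomes (times the sign relating the product to the positive Pauli string). *)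

theory Defs
  imports Complex_Main "Jordan_Normal_Form.Matrix"
begin

text \<open>A two-qubit state is a unit vector in C^4; basis index 2*a+b corresponds to |a b>.\<close>

definition vnorm2 :: "complex vec \<Rightarrow> real" where
  "vnorm2 v = (\<Sum>i<dim_vec v. (cmod (v $ i))^2)"

definition is_state :: "complex vec \<Rightarrow> bool" where
  "is_state psi \<longleftrightarrow> psi \<in> carrier_vec 4 \<and> vnorm2 psi = 1"

datatype pauli1 = PI | PX | PY | PZ

definition pauli1_mat :: "pauli1 \<Rightarrow> complex mat" where
  "pauli1_mat p = (case p of
      PI \<Rightarrow> mat_of_rows_list 2 [[1, 0], [0, 1]]
    | PX \<Rightarrow> mat_of_rows_list 2 [[0, 1], [1, 0]]
    | PY \<Rightarrow> mat_of_rows_list 2 [[0, -\<i>], [\<i>, 0]]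
    | PZ \<Rightarrow> mat_of_rows_list 2 [[1, 0], [0, -1]])"

type_synonym pauli2 = "pauli1 \<times> pauli1"

definition pauli2_mat :: "pauli2 \<Rightarrow> complex mat" where
  "pauli2_mat P = (let A = pauli1_mat (fst P); B = pauli1_mat (snd P) in
     mat 4 4 (\<lambda>(i, j). A $$ (i div 2, j div 2) * B $$ (i mod 2, j mod 2)))"

definition pauli_proj :: "pauli2 \<Rightarrow> complex \<Rightarrow> complex mat" where
  "pauli_proj P s = (1/2 :: complex) \<cdot>\<^sub>m (1\<^sub>m 4 + s \<cdot>\<^sub>m pauli2_mat P)"

definition pauli_outcome_prob :: "pauli2 \<Rightarrow> complex \<Rightarrow> complex vec \<Rightarrow> real" where
  "pauli_outcome_prob P s psi = vnorm2 (pauli_proj P s *\<^sub>v psi)"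

definition is_stabilizer :: "pauli2 \<Rightarrow> complex vec \<Rightarrow> bool" where
  "is_stabilizer P psi \<longleftrightarrow> (\<exists>s \<in> {1, -1}. pauli_outcome_prob P s psi = 1)"

definition adjoint_mat :: "complex mat \<Rightarrow> complex mat" where
  "adjoint_mat M = mat (dim_col M) (dim_row M) (\<lambda>(i, j). cnj (M $$ (j, i)))"

definition is_proj_measurement :: "complex mat list \<Rightarrow> bool" where
  "is_proj_measurement Ms \<longleftrightarrow>
     Ms \<noteq> [] \<and>
     (\<forall>M \<in> set Ms. M \<in> carrier_mat 4 4 \<and> adjoint_mat M = M \<and> M * M = M) \<and>
     foldr (+) Ms (0\<^sub>m 4 4) = 1\<^sub>m 4"

definition outcome_prob :: "complex mat list \<Rightarrow> nat \<Rightarrow> complex vec \<Rightarrow> real" where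
  "outcome_prob Ms k psi = vnorm2 ((Ms ! k) *\<^sub>v psi)"

end

theory Submission
  imports Defs
begin

(*
  The six measurements are the rows and columns of the Mermin-Peres magic square. Each is a
  context of three commuting Pauli observables A, B and +-AB, measured jointly by projecting onto
  the common eigenspaces of A and B; an outcome thus assigns an eigenvalue to each of the three
  observables, and the product of the three values is +1 in every context except the last column,
  where XX * ZZ = -YY. Multiplying all nine values once row by row and once column by column shows
  that the row outcomes and the column outcomes cannot agree on every cell, and the procedure
  outputs a cell P on which they disagree. If P stabilized psi, then psi would be an eigenvector of
  P, so the measurement that reported the other eigenvalue of P would have had probability zero.
*)

lemma dim_adjoint_mat [simp]: "dim_row (adjoint_mat A) = dim_col A" "dim_col (adjoint_mat A) = dim_row A"
  by (simp_all add: adjoint_mat_def)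

lemma adjoint_mat_mult:
  assumes "A \<in> carrier_mat n k" "B \<in> carrier_mat k m"
  shows "adjoint_mat (A * B) = adjoint_mat B * adjoint_mat A"
  using assms by (intro eq_matI) (auto simp: adjoint_mat_def scalar_prod_def mult.commute)

lemma smult_mat_mult_vec: "dim_vec v = dim_col A \<Longrightarrow> (k \<cdot>\<^sub>m A) *\<^sub>v v = k \<cdot>\<^sub>v (A *\<^sub>v v)"
  by (intro eq_vecI) (auto simp: scalar_prod_def sum_distrib_left mult.assoc intro!: sum.cong)

lemma cscalar_prod_mult_mat_vec:
  assumes "A \<in> carrier_mat n m" "v \<in> carrier_vec m" "w \<in> carrier_vec n"
  shows "(A *\<^sub>v v) \<bullet>c w = v \<bullet>c (adjoint_mat A *\<^sub>v w)"
proof -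
  have "(A *\<^sub>v v) \<bullet>c w = (\<Sum>i<n. \<Sum>j<m. A $$ (i, j) * v $ j * cnj (w $ i))"
    using assms by (simp add: scalar_prod_def sum_distrib_right atLeast0LessThan)
  also have "\<dots> = (\<Sum>j<m. \<Sum>i<n. v $ j * cnj (cnj (A $$ (i, j)) * w $ i))"
    by (subst sum.swap) (simp add: mult_ac)
  also have "\<dots> = v \<bullet>c (adjoint_mat A *\<^sub>v w)"
    using assms by (simp add: scalar_prod_def adjoint_mat_def sum_distrib_left atLeast0LessThan)
  finally show ?thesis .
qed

lemma vnorm2_cscalar_prod: "complex_of_real (vnorm2 v) = v \<bullet>c v"
  unfolding vnorm2_def scalar_prod_def of_real_sum
  by (simp add: complex_norm_square atLeast0LessThan del: of_real_power)

lemma vnorm2_unitary: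
  assumes "A \<in> carrier_mat n n" "adjoint_mat A * A = 1\<^sub>m n" "v \<in> carrier_vec n"
  shows "vnorm2 (A *\<^sub>v v) = vnorm2 v"
proof -
  have "adjoint_mat A *\<^sub>v (A *\<^sub>v v) = (adjoint_mat A * A) *\<^sub>v v"
    using assms by (subst assoc_mult_mat_vec[of _ n n]) auto
  then have "(A *\<^sub>v v) \<bullet>c (A *\<^sub>v v) = v \<bullet>c v"
    using assms by (simp add: cscalar_prod_mult_mat_vec)
  then show ?thesis
    by (simp flip: vnorm2_cscalar_prod)
qed

lemma vnorm2_smult: "vnorm2 (c \<cdot>\<^sub>v v) = (cmod c)\<^sup>2 * vnorm2 v"
  by (simp add: vnorm2_def sum_distrib_left norm_mult power_mult_distrib)

lemma vnorm2_eq_0_iff: "vnorm2 v = 0 \<longleftrightarrow> v = 0\<^sub>v (dim_vec v)"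
  by (auto simp: vnorm2_def sum_nonneg_eq_0_iff vec_eq_iff)

lemma vnorm2_parallelogram:
  assumes "dim_vec w = dim_vec v"
  shows "vnorm2 (v + w) + vnorm2 (v - w) = 2 * (vnorm2 v + vnorm2 w)"
proof -
  have "(cmod (a + b))\<^sup>2 + (cmod (a - b))\<^sup>2 = 2 * ((cmod a)\<^sup>2 + (cmod b)\<^sup>2)" for a b :: complex
    unfolding cmod_power2 by (simp add: power2_eq_square algebra_simps)
  then show ?thesis
    using assms by (simp add: vnorm2_def sum.distrib sum_distrib_left flip: sum.distrib)
qed

section \<open>Eigenprojectors of a hermitian involution\<close>

definition hermitian_involution :: "nat \<Rightarrow> complex mat \<Rightarrow> bool" where
  "hermitian_involution n A \<longleftrightarrow> A \<in> carrier_mat n n \<and> adjoint_mat A = A \<and> A * A = 1\<^sub>m n"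

definition eigen_proj :: "complex mat \<Rightarrow> complex \<Rightarrow> complex mat" where
  "eigen_proj A s = (1 / 2) \<cdot>\<^sub>m (1\<^sub>m (dim_row A) + s \<cdot>\<^sub>m A)"

lemma dim_eigen_proj [simp]: "dim_row (eigen_proj A s) = dim_row A" "dim_col (eigen_proj A s) = dim_col A"
  by (simp_all add: eigen_proj_def)

lemma eigen_proj_carrier [simp]: "A \<in> carrier_mat n n \<Longrightarrow> eigen_proj A s \<in> carrier_mat n n"
  by (simp add: eigen_proj_def)

lemma eigen_proj_mult_vec:
  assumes "A \<in> carrier_mat n n" "v \<in> carrier_vec n"
  shows "eigen_proj A s *\<^sub>v v = (1 / 2) \<cdot>\<^sub>v (v + s \<cdot>\<^sub>v (A *\<^sub>v v))"
  using assms by (simp add: eigen_proj_def smult_mat_mult_vec add_mult_distrib_mat_vec[of _ n n])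

lemma mult_eigen_proj:
  assumes "X \<in> carrier_mat k n" "A \<in> carrier_mat n n"
  shows "X * eigen_proj A s = (1 / 2) \<cdot>\<^sub>m (X + s \<cdot>\<^sub>m (X * A))"
  using assms by (simp add: eigen_proj_def mult_smult_distrib[of X k n _ n] mult_add_distrib_mat[of X k n _ n])

lemma eigen_proj_mult:
  assumes "X \<in> carrier_mat n k" "A \<in> carrier_mat n n"
  shows "eigen_proj A s * X = (1 / 2) \<cdot>\<^sub>m (X + s \<cdot>\<^sub>m (A * X))"
  using assms by (simp add: eigen_proj_def mult_smult_assoc_mat[of _ n n X k] add_mult_distrib_mat[of _ n n _ X k])

lemma mult_eigen_proj_eigen:
  assumes "M \<in> carrier_mat k n" "A \<in> carrier_mat n n" "M * A = a \<cdot>\<^sub>m M"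
  shows "M * eigen_proj A c = ((1 + c * a) / 2) \<cdot>\<^sub>m M"
  using assms by (simp add: mult_eigen_proj) (intro eq_matI; simp add: field_simps)

lemma eigen_proj_commute:
  assumes "X \<in> carrier_mat n n" "A \<in> carrier_mat n n" "X * A = A * X"
  shows "X * eigen_proj A s = eigen_proj A s * X"
  using assms by (simp add: mult_eigen_proj eigen_proj_mult)

lemma eigen_proj_mult_self:
  assumes A: "A \<in> carrier_mat n n" "A * A = 1\<^sub>m n" and "s * s = 1"
  shows "eigen_proj A s * A = s \<cdot>\<^sub>m eigen_proj A s"
proof -
  have ss: "s * (s * x) = x" for x
    using \<open>s * s = 1\<close> by (simp flip: mult.assoc)
  have "eigen_proj A s * A = (1 / 2) \<cdot>\<^sub>m (A + s \<cdot>\<^sub>m 1\<^sub>m n)"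
    using A by (simp add: eigen_proj_mult)
  also have "\<dots> = s \<cdot>\<^sub>m eigen_proj A s"
    using A by (intro eq_matI) (auto simp: eigen_proj_def algebra_simps ss)
  finally show ?thesis .
qed

lemma eigen_proj_add_opposite:
  assumes "A \<in> carrier_mat n n"
  shows "eigen_proj A s + eigen_proj A (- s) = 1\<^sub>m n"
  using assms by (intro eq_matI) (auto simp: eigen_proj_def field_simps)

lemma adjoint_eigen_proj:
  assumes A: "A \<in> carrier_mat n n" "adjoint_mat A = A" and "cnj s = s"
  shows "adjoint_mat (eigen_proj A s) = eigen_proj A s"
proof -
  have "cnj (A $$ (j, i)) = A $$ (i, j)" if "i < n" "j < n" for i j
  proof -
    have "adjoint_mat A $$ (i, j) = A $$ (i, j)"
      using A by simp
    then show ?thesis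
      using A that by (simp add: adjoint_mat_def)
  qed
  then show ?thesis
    using assms by (intro eq_matI) (auto simp: adjoint_mat_def eigen_proj_def)
qed

lemma eigen_proj_norm_eq_imp_eigenvector:
  assumes A: "hermitian_involution n A" and v: "v \<in> carrier_vec n"
    and s: "s \<in> {1, -1}" and norm: "vnorm2 (eigen_proj A s *\<^sub>v v) = vnorm2 v"
  shows "A *\<^sub>v v = s \<cdot>\<^sub>v v"
proof -
  have A': "A \<in> carrier_mat n n" "adjoint_mat A * A = 1\<^sub>m n"
    using A by (auto simp: hermitian_involution_def)
  have cmod_s: "cmod s = 1" and ss: "s * s = 1"
    using s by auto
  define w where "w = s \<cdot>\<^sub>v (A *\<^sub>v v)"
  have w: "w \<in> carrier_vec n" "vnorm2 w = vnorm2 v"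
    using A' v by (auto simp: w_def vnorm2_smult cmod_s vnorm2_unitary)
  have "vnorm2 (eigen_proj A s *\<^sub>v v) = vnorm2 (v + w) / 4"
    using A' v by (simp add: eigen_proj_mult_vec w_def vnorm2_smult power2_eq_square)
  with norm have "vnorm2 (v + w) = 4 * vnorm2 v"
    by simp
  with vnorm2_parallelogram[of w v] w v have "vnorm2 (v - w) = 0"
    by simp
  then have "v = w"
    using v w by (auto simp: vnorm2_eq_0_iff vec_eq_iff)
  then show ?thesis
    using A' v by (intro eq_vecI) (auto simp: w_def vec_eq_iff ss mult.assoc[symmetric])
qed

lemma mult_vec_eq_0_if_eigenvalues_differ:
  fixes M A :: "complex mat"
  assumes M: "M \<in> carrier_mat k n" and A: "A \<in> carrier_mat n n" and v: "v \<in> carrier_vec n"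
    and MA: "M * A = a \<cdot>\<^sub>m M" and Av: "A *\<^sub>v v = s \<cdot>\<^sub>v v" and "a \<noteq> s"
  shows "M *\<^sub>v v = 0\<^sub>v k"
proof -
  have "a \<cdot>\<^sub>v (M *\<^sub>v v) = (M * A) *\<^sub>v v"
    using M v by (simp add: MA smult_mat_mult_vec)
  also have "\<dots> = s \<cdot>\<^sub>v (M *\<^sub>v v)"
    using M A v by (simp add: Av mult_mat_vec[OF M v])
  finally show ?thesis
    using M \<open>a \<noteq> s\<close> by (intro eq_vecI) (auto simp: vec_eq_iff)
qed

section \<open>Joint measurement of two commuting observables\<close>

definition outcome_signs :: "(complex \<times> complex) list" where
  "outcome_signs = [(1, 1), (1, -1), (-1, 1), (-1, -1)]"

definition joint_measurement :: "complex mat \<Rightarrow> complex mat \<Rightarrow> complex mat list" where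
  "joint_measurement A B = map (\<lambda>(a, b). eigen_proj A a * eigen_proj B b) outcome_signs"

lemma joint_proj_mult_eigen:
  assumes A: "hermitian_involution n A" and B: "hermitian_involution n B" and AB: "A * B = B * A"
    and ab: "a \<in> {1, -1}" "b \<in> {1, -1}"
  defines "M \<equiv> eigen_proj A a * eigen_proj B b"
  shows "M * A = a \<cdot>\<^sub>m M" "M * B = b \<cdot>\<^sub>m M" "M * (A * B) = (a * b) \<cdot>\<^sub>m M"
proof -
  have carr: "A \<in> carrier_mat n n" "B \<in> carrier_mat n n"
    using A B by (auto simp: hermitian_involution_def)
  have PA: "eigen_proj A a \<in> carrier_mat n n" and PB: "eigen_proj B b \<in> carrier_mat n n"
    using carr by auto
  have "a * a = 1" "b * b = 1"
    using ab by auto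
  with A B have eigen: "eigen_proj A a * A = a \<cdot>\<^sub>m eigen_proj A a" "eigen_proj B b * B = b \<cdot>\<^sub>m eigen_proj B b"
    by (auto simp: hermitian_involution_def eigen_proj_mult_self)
  have "eigen_proj B b * A = A * eigen_proj B b"
    using eigen_proj_commute[of A n B b] carr AB by simp
  then have "M * A = eigen_proj A a * A * eigen_proj B b"
    unfolding M_def using PA PB carr by (simp add: assoc_mult_mat[of _ n n _ n _ n])
  also have "\<dots> = a \<cdot>\<^sub>m M"
    using PB carr by (simp add: eigen mult_smult_assoc_mat[of _ n n _ n] M_def)
  finally show MA: "M * A = a \<cdot>\<^sub>m M" .
  have "M * B = eigen_proj A a * (eigen_proj B b * B)"
    unfolding M_def using PA PB carr by (simp add: assoc_mult_mat[of _ n n _ n _ n])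
  also have "\<dots> = b \<cdot>\<^sub>m M"
    using PA carr by (simp add: eigen mult_smult_distrib[of _ n n _ n] M_def)
  finally show MB: "M * B = b \<cdot>\<^sub>m M" .
  have Mc: "M \<in> carrier_mat n n"
    unfolding M_def using PA PB by simp
  then have "M * (A * B) = (M * A) * B"
    using assoc_mult_mat[OF _ carr] by simp
  also have "\<dots> = a \<cdot>\<^sub>m (b \<cdot>\<^sub>m M)"
    using Mc carr by (simp add: MA MB mult_smult_assoc_mat[of _ n n _ n])
  also have "\<dots> = (a * b) \<cdot>\<^sub>m M"
    by (intro eq_matI) auto
  finally show "M * (A * B) = (a * b) \<cdot>\<^sub>m M" .
qed

lemma joint_proj_orthogonal_projector:
  assumes A: "hermitian_involution n A" and B: "hermitian_involution n B" and AB: "A * B = B * A"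
    and ab: "a \<in> {1, -1}" "b \<in> {1, -1}"
  defines "M \<equiv> eigen_proj A a * eigen_proj B b"
  shows "adjoint_mat M = M" "M * M = M"
proof -
  have carr: "A \<in> carrier_mat n n" "B \<in> carrier_mat n n"
    using A B by (auto simp: hermitian_involution_def)
  have PA: "eigen_proj A a \<in> carrier_mat n n" and PB: "eigen_proj B b \<in> carrier_mat n n"
    using carr by auto
  then have Mc: "M \<in> carrier_mat n n"
    unfolding M_def by simp
  have "B * eigen_proj A a = eigen_proj A a * B"
    using eigen_proj_commute[OF carr(2,1)] AB by simp
  then have comm: "eigen_proj B b * eigen_proj A a = M"
    unfolding M_def using eigen_proj_commute[OF PA carr(2)] by simp
  have herm: "adjoint_mat A = A" "adjoint_mat B = B"
    using A B by (auto simp: hermitian_involution_def)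
  have "cnj a = a" "cnj b = b"
    using ab by auto
  then have "adjoint_mat M = eigen_proj B b * eigen_proj A a"
    unfolding M_def using carr herm by (simp add: adjoint_mat_mult[OF PA PB] adjoint_eigen_proj)
  with comm show "adjoint_mat M = M"
    by simp
  have MA: "M * A = a \<cdot>\<^sub>m M" and MB: "M * B = b \<cdot>\<^sub>m M"
    using joint_proj_mult_eigen(1,2)[OF A B AB ab] unfolding M_def .
  have "(1 + a * a) / 2 = 1" "(1 + b * b) / 2 = 1"
    using ab by auto
  then have "M * eigen_proj A a = M" "M * eigen_proj B b = M"
    using mult_eigen_proj_eigen[OF Mc carr(1) MA] mult_eigen_proj_eigen[OF Mc carr(2) MB]
    by (auto intro!: eq_matI)
  then show "M * M = M"
    using assoc_mult_mat[OF Mc PA PB] unfolding M_def by simp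
qed

lemma joint_measurement_sum:
  assumes carr: "A \<in> carrier_mat n n" "B \<in> carrier_mat n n"
  shows "foldr (+) (joint_measurement A B) (0\<^sub>m n n) = 1\<^sub>m n"
proof -
  have rows: "eigen_proj A a * eigen_proj B 1 + eigen_proj A a * eigen_proj B (-1) = eigen_proj A a" for a
  proof -
    have "eigen_proj A a * eigen_proj B 1 + eigen_proj A a * eigen_proj B (-1)
        = eigen_proj A a * (eigen_proj B 1 + eigen_proj B (-1))"
      using carr mult_add_distrib_mat[of "eigen_proj A a" n n "eigen_proj B 1" n "eigen_proj B (-1)"]
      by simp
    then show ?thesis
      using carr eigen_proj_add_opposite[of B n 1] right_mult_one_mat[of "eigen_proj A a" n n] by simp
  qed
  have "foldr (+) (joint_measurement A B) (0\<^sub>m n n)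
      = (eigen_proj A 1 * eigen_proj B 1 + eigen_proj A 1 * eigen_proj B (-1))
      + (eigen_proj A (-1) * eigen_proj B 1 + eigen_proj A (-1) * eigen_proj B (-1))"
    using carr by (intro eq_matI) (simp_all add: joint_measurement_def outcome_signs_def add.assoc)
  also have "\<dots> = 1\<^sub>m n"
    using carr eigen_proj_add_opposite[of A n 1] by (simp add: rows)
  finally show ?thesis .
qed

lemma joint_measurement_is_proj:
  assumes A: "hermitian_involution 4 A" and B: "hermitian_involution 4 B" and AB: "A * B = B * A"
  shows "is_proj_measurement (joint_measurement A B)"
proof -
  have carr: "A \<in> carrier_mat 4 4" "B \<in> carrier_mat 4 4"
    using A B by (auto simp: hermitian_involution_def)
  have "M \<in> carrier_mat 4 4 \<and> adjoint_mat M = M \<and> M * M = M" if "M \<in> set (joint_measurement A B)" for M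
    using that carr joint_proj_orthogonal_projector[OF A B AB]
    by (auto simp: joint_measurement_def outcome_signs_def)
  then show ?thesis
    using joint_measurement_sum[OF carr] unfolding is_proj_measurement_def
    by (simp add: joint_measurement_def outcome_signs_def)
qed

lemma mat4_eqI:
  assumes "dim_row A = 4" "dim_col A = 4" "dim_row B = 4" "dim_col B = 4"
    and "\<forall>i \<in> {0, 1, 2, 3}. \<forall>j \<in> {0, 1, 2, 3}. A $$ (i, j) = B $$ (i, j)"
  shows "A = B"
  using assms by (intro eq_matI) (auto simp: less_Suc_eq numeral_eq_Suc)

lemma index_mult_mat4:
  assumes "dim_col A = 4" "dim_row B = 4" "i < dim_row A" "j < dim_col B"
  shows "(A * B) $$ (i, j) =
    A $$ (i, 0) * B $$ (0, j) + A $$ (i, 1) * B $$ (1, j) + A $$ (i, 2) * B $$ (2, j) + A $$ (i, 3) * B $$ (3, j)"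
  using assms by (simp add: scalar_prod_def numeral_eq_Suc)

lemma dim_pauli2_mat [simp]: "dim_row (pauli2_mat P) = 4" "dim_col (pauli2_mat P) = 4"
  by (simp_all add: pauli2_mat_def Let_def)

lemma pauli2_mat_carrier [simp]: "pauli2_mat P \<in> carrier_mat 4 4"
  by (simp add: carrier_matI)

lemma index_pauli1_mat:
  "i < 2 \<Longrightarrow> j < 2 \<Longrightarrow> pauli1_mat p $$ (i, j) =
    (case p of
      PI \<Rightarrow> [[1, 0], [0, 1]]
    | PX \<Rightarrow> [[0, 1], [1, 0]]
    | PY \<Rightarrow> [[0, -\<i>], [\<i>, 0]]
    | PZ \<Rightarrow> [[1, 0], [0, -1 :: complex]]) ! i ! j"
  by (cases p) (simp_all add: pauli1_mat_def mat_of_rows_list_def)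

lemma index_pauli2_mat:
  "i < 4 \<Longrightarrow> j < 4 \<Longrightarrow>
    pauli2_mat P $$ (i, j) = pauli1_mat (fst P) $$ (i div 2, j div 2) * pauli1_mat (snd P) $$ (i mod 2, j mod 2)"
  by (simp add: pauli2_mat_def Let_def)

lemmas pauli_entries = index_pauli2_mat index_pauli1_mat

lemma pauli2_mat_hermitian_involution: "hermitian_involution 4 (pauli2_mat P)"
proof -
  obtain p q where P: "P = (p, q)"
    by fastforce
  have "adjoint_mat (pauli2_mat (p, q)) = pauli2_mat (p, q)"
    by (rule mat4_eqI; cases p; cases q) (simp_all add: adjoint_mat_def pauli_entries)
  moreover have "pauli2_mat (p, q) * pauli2_mat (p, q) = 1\<^sub>m 4"
    by (rule mat4_eqI; cases p; cases q) (simp_all add: index_mult_mat4 pauli_entries del: index_mult_mat(1))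
  ultimately show ?thesis
    unfolding hermitian_involution_def P by simp
qed

lemma pauli_proj_eq_eigen_proj: "pauli_proj P s = eigen_proj (pauli2_mat P) s"
  by (simp add: pauli_proj_def eigen_proj_def)

lemma stabilizer_eigenvector:
  assumes "is_state psi" "is_stabilizer P psi"
  shows "\<exists>s \<in> {1, -1}. pauli2_mat P *\<^sub>v psi = s \<cdot>\<^sub>v psi"
  using assms eigen_proj_norm_eq_imp_eigenvector[OF pauli2_mat_hermitian_involution]
  unfolding is_state_def is_stabilizer_def pauli_outcome_prob_def pauli_proj_eq_eigen_proj
  by metis

section \<open>The Mermin-Peres magic square\<close>

definition magic_square :: "pauli2 list list" where
  "magic_square =
    [[(PX, PI), (PI, PX), (PX, PX)],
     [(PI, PZ), (PZ, PI), (PZ, PZ)],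
     [(PX, PZ), (PZ, PX), (PY, PY)]]"

definition magic_context :: "nat \<Rightarrow> pauli2 list" where
  "magic_context m = (if m < 3 then magic_square ! m else map (\<lambda>row. row ! (m - 3)) magic_square)"

(* The third observable of context m is context_sign m times the product of the first two;
   the only minus sign is XX * ZZ = -YY in the last column. *)
definition context_sign :: "nat \<Rightarrow> complex" where
  "context_sign m = (if m = 5 then -1 else 1)"

definition magic_measurements :: "complex mat list list" where
  "magic_measurements =
    map (\<lambda>m. joint_measurement (pauli2_mat (magic_context m ! 0)) (pauli2_mat (magic_context m ! 1))) [0..<6]"

definition reported_value :: "nat \<Rightarrow> nat \<Rightarrow> nat \<Rightarrow> complex" where
  "reported_value m k p = (case outcome_signs ! k of (a, b) \<Rightarrow> [a, b, context_sign m * a * b] ! p)"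

definition magic_output :: "nat list \<Rightarrow> pauli2" where
  "magic_output os =
    (case SOME (r, c). r < 3 \<and> c < 3 \<and> reported_value r (os ! r) c \<noteq> reported_value (3 + c) (os ! (3 + c)) r
     of (r, c) \<Rightarrow> magic_square ! r ! c)"

lemma length_magic_square: "length magic_square = 3"
  by (simp add: magic_square_def)

lemma magic_context_cell:
  assumes "r < 3" "c < 3"
  shows "magic_context r ! c = magic_square ! r ! c" "magic_context (3 + c) ! r = magic_square ! r ! c"
  using assms by (simp_all add: magic_context_def length_magic_square)

lemma magic_context_relations:
  assumes "m < 6"
  defines "A \<equiv> pauli2_mat (magic_context m ! 0)" and "B \<equiv> pauli2_mat (magic_context m ! 1)"
  shows "A * B = B * A" "pauli2_mat (magic_context m ! 2) = context_sign m \<cdot>\<^sub>m (A * B)"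
proof -
  have m: "m = 0 \<or> m = 1 \<or> m = 2 \<or> m = 3 \<or> m = 4 \<or> m = 5"
    using assms(1) by auto
  show "A * B = B * A"
    unfolding A_def B_def
    by (insert m; elim disjE; rule mat4_eqI)
      (simp_all add: magic_context_def magic_square_def index_mult_mat4 pauli_entries del: index_mult_mat(1))
  show "pauli2_mat (magic_context m ! 2) = context_sign m \<cdot>\<^sub>m (A * B)"
    unfolding A_def B_def
    by (insert m; elim disjE; rule mat4_eqI)
      (simp_all add: magic_context_def magic_square_def context_sign_def index_mult_mat4 pauli_entries
        del: index_mult_mat(1))
qed

lemma length_magic_measurements: "length magic_measurements = 6"
  by (simp add: magic_measurements_def)

lemma length_magic_measurement: "m < 6 \<Longrightarrow> length (magic_measurements ! m) = 4"
  by (simp add: magic_measurements_def joint_measurement_def outcome_signs_def)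

lemma magic_measurements_are_proj: "\<forall>M \<in> set magic_measurements. is_proj_measurement M"
  using magic_context_relations(1)
  by (auto simp: magic_measurements_def intro!: joint_measurement_is_proj pauli2_mat_hermitian_involution)

lemma magic_outcome_mult_pauli:
  assumes "m < 6" "k < 4" "p < 3"
  shows "magic_measurements ! m ! k * pauli2_mat (magic_context m ! p)
    = reported_value m k p \<cdot>\<^sub>m (magic_measurements ! m ! k)"
proof -
  define A where "A = pauli2_mat (magic_context m ! 0)"
  define B where "B = pauli2_mat (magic_context m ! 1)"
  obtain a b where ab: "outcome_signs ! k = (a, b)"
    by fastforce
  have signs: "a \<in> {1, -1}" "b \<in> {1, -1}"
    using assms(2) ab by (auto simp: outcome_signs_def less_Suc_eq numeral_eq_Suc)
  define M where "M = eigen_proj A a * eigen_proj B b"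
  have "length outcome_signs = 4"
    by (simp add: outcome_signs_def)
  then have M: "magic_measurements ! m ! k = M"
    using assms(1,2) ab by (simp add: magic_measurements_def joint_measurement_def A_def B_def M_def)
  note eigen = joint_proj_mult_eigen[OF pauli2_mat_hermitian_involution pauli2_mat_hermitian_involution
      magic_context_relations(1)[OF assms(1)] signs, folded A_def B_def M_def]
  have "M \<in> carrier_mat 4 4" "A * B \<in> carrier_mat 4 4"
    by (intro carrier_matI; simp add: M_def A_def B_def)+
  then have "M * pauli2_mat (magic_context m ! 2) = (context_sign m * a * b) \<cdot>\<^sub>m M"
    using magic_context_relations(2)[OF assms(1), folded A_def B_def] eigen(3)
    by (auto simp: mult_smult_distrib intro!: eq_matI)
  moreover have "p = 0 \<or> p = 1 \<or> p = 2"
    using assms(3) by auto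
  ultimately show ?thesis
    using eigen(1,2) ab by (auto simp: M reported_value_def A_def B_def)
qed

lemma possible_outcome_reports_eigenvalue:
  assumes "m < 6" "k < 4" "p < 3" and psi: "psi \<in> carrier_vec 4"
    and eigen: "pauli2_mat (magic_context m ! p) *\<^sub>v psi = s \<cdot>\<^sub>v psi"
    and possible: "outcome_prob (magic_measurements ! m) k psi > 0"
  shows "reported_value m k p = s"
proof (rule ccontr)
  assume "reported_value m k p \<noteq> s"
  have "is_proj_measurement (magic_measurements ! m)"
    using magic_measurements_are_proj assms(1) by (simp add: length_magic_measurements)
  then have "magic_measurements ! m ! k \<in> carrier_mat 4 4"
    using assms(1,2) by (auto simp: is_proj_measurement_def length_magic_measurement)
  then have "magic_measurements ! m ! k *\<^sub>v psi = 0\<^sub>v 4"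
    using pauli2_mat_carrier psi magic_outcome_mult_pauli[OF assms(1-3)] eigen \<open>reported_value m k p \<noteq> s\<close>
    by (rule mult_vec_eq_0_if_eigenvalues_differ)
  with possible show False
    by (simp add: outcome_prob_def vnorm2_def)
qed

lemma reported_values_product: "k < 4 \<Longrightarrow> (\<Prod>p<3. reported_value m k p) = context_sign m"
  by (auto simp: reported_value_def outcome_signs_def numeral_eq_Suc less_Suc_eq)

lemma magic_square_conflict:
  assumes "\<forall>m < 6. os ! m < 4"
  shows "\<exists>r < 3. \<exists>c < 3. reported_value r (os ! r) c \<noteq> reported_value (3 + c) (os ! (3 + c)) r"
proof (rule ccontr)
  assume "\<not> ?thesis"
  then have agree: "reported_value r (os ! r) c = reported_value (3 + c) (os ! (3 + c)) r"
    if "r < 3" "c < 3" for r c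
    using that by blast
  have "1 = (\<Prod>r<3. context_sign r)"
    by (simp add: context_sign_def)
  also have "\<dots> = (\<Prod>r<3. \<Prod>c<3. reported_value r (os ! r) c)"
    using assms by (simp add: reported_values_product)
  also have "\<dots> = (\<Prod>r<3. \<Prod>c<3. reported_value (3 + c) (os ! (3 + c)) r)"
    using agree by simp
  also have "\<dots> = (\<Prod>c<3. \<Prod>r<3. reported_value (3 + c) (os ! (3 + c)) r)"
    by (rule prod.swap)
  also have "\<dots> = (\<Prod>c<3. context_sign (3 + c))"
    using assms by (simp add: reported_values_product)
  also have "\<dots> = -1"
    by (simp add: context_sign_def numeral_eq_Suc)
  finally show False
    by simp
qed

lemma magic_output_conflict:
  assumes "\<forall>m < 6. os ! m < 4"
  obtains r c where "r < 3" "c < 3" "reported_value r (os ! r) c \<noteq> reported_value (3 + c) (os ! (3 + c)) r"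
    and "magic_output os = magic_square ! r ! c"
proof -
  let ?conflict = "\<lambda>(r, c). r < 3 \<and> c < 3 \<and> reported_value r (os ! r) c \<noteq> reported_value (3 + c) (os ! (3 + c)) r"
  have "\<exists>rc. ?conflict rc"
    using magic_square_conflict[OF assms] by auto
  then have "?conflict (SOME rc. ?conflict rc)"
    by (rule someI_ex)
  then show ?thesis
    using that by (auto simp: magic_output_def split: prod.splits)
qed

lemma magic_output_not_stabilizer:
  assumes state: "is_state psi"
    and possible: "\<forall>m < 6. os ! m < length (magic_measurements ! m) \<and>
      outcome_prob (magic_measurements ! m) (os ! m) psi > 0"
  shows "\<not> is_stabilizer (magic_output os) psi"
proof
  assume "is_stabilizer (magic_output os) psi"
  then obtain s where s: "pauli2_mat (magic_output os) *\<^sub>v psi = s \<cdot>\<^sub>v psi"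
    using stabilizer_eigenvector[OF state] by blast
  have psi: "psi \<in> carrier_vec 4"
    using state by (simp add: is_state_def)
  have outcomes: "\<forall>m < 6. os ! m < 4"
    using possible by (simp add: length_magic_measurement)
  then obtain r c where rc: "r < 3" "c < 3"
    and conflict: "reported_value r (os ! r) c \<noteq> reported_value (3 + c) (os ! (3 + c)) r"
    and out: "magic_output os = magic_square ! r ! c"
    by (rule magic_output_conflict)
  have "reported_value r (os ! r) c = s"
    using possible_outcome_reports_eigenvalue[OF _ _ _ psi] s out rc outcomes possible
    by (simp add: magic_context_cell)
  moreover have "reported_value (3 + c) (os ! (3 + c)) r = s"
    using possible_outcome_reports_eigenvalue[OF _ _ _ psi] s out rc outcomes possible
    by (simp add: magic_context_cell)
  ultimately show False
    using conflict by simp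
qed

theorem mainTheorem6:
  shows "\<exists>(Ms :: complex mat list list) (out :: nat list \<Rightarrow> pauli2).
           length Ms = 6 \<and> (\<forall>M \<in> set Ms. is_proj_measurement M) \<and>
           (\<forall>psi os. is_state psi \<longrightarrow> length os = 6 \<longrightarrow>
              (\<forall>i < 6. os ! i < length (Ms ! i) \<and> outcome_prob (Ms ! i) (os ! i) psi > 0) \<longrightarrow>
              \<not> is_stabilizer (out os) psi)"
  using length_magic_measurements magic_measurements_are_proj magic_output_not_stabilizer by blast

end
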